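(* There exists a universal constant $c>0$ such that the following holds. Let $n\in\mathbb{N}$, $q$ a prime power, $1\le\ell<q$ an integer, and $\rho\in(0,1-\ell/q)$. Let $T_1,\dots,T_n\subseteq\mathbb{F}_q$ each have size $\ell$. If $n\ge\left(\frac{\log q}{\rho(1-\ell/q-\rho)}\right)^{c}$, then the list-recovery ball $B_\rho(T_1\times\cdots\times T_n)$ is $\delta$-mixing for $$\delta=\log_q\left(\frac{(q-\ell)(1-\rho)}{\rho\ell}\right)\cdot\frac{\rho^4(1-\ell/q-\rho)^2}{16\log q}.$$
   Context: $\log$ is base 2. $B_\rho(T_1\times\cdots\times T_n)=\{x\in\mathbb{F}_q^n: |\{i:x_i\notin T_i\}|\le\rho n\}$. A set $T\subseteq\mathbb{F}_q^n$ is $\delta$-mixing if for all nonzero $\alpha,\beta\in\mathbb{F}_q$ and all $z\in\mathbb{F}_q^n$, $\Pr[\alpha X+\beta X'\in T+z]\le q^{-\delta n}$, where $X,X'$ are independent and uniform on $T$. *)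

theory Defs
  imports "HOL-Algebra.Ring" "HOL-Algebra.QuotRing" "HOL-Analysis.Analysis"
begin

text \<open>The finite field F_q is an HOL-Algebra field R (with carrier a finite set of
naturals, so that the universal constant can be quantified before the field);
q = card (carrier R).\<close>

definition fvecs :: "('a, 'b) ring_scheme \<Rightarrow> nat \<Rightarrow> (nat \<Rightarrow> 'a) set" where
  "fvecs R n = PiE {..<n} (\<lambda>_. carrier R)"

definition lr_ball :: "('a, 'b) ring_scheme \<Rightarrow> nat \<Rightarrow> real \<Rightarrow> (nat \<Rightarrow> 'a set) \<Rightarrow> (nat \<Rightarrow> 'a) set" where
  "lr_ball R n \<rho> T = {x \<in> fvecs R n. real (card {i \<in> {..<n}. x i \<notin> T i}) \<le> \<rho> * real n}"

definition vtrans :: "('a, 'b) ring_scheme \<Rightarrow> nat \<Rightarrow> (nat \<Rightarrow> 'a) set \<Rightarrow> (nat \<Rightarrow> 'a) \<Rightarrow> (nat \<Rightarrow> 'a) set" where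
  "vtrans R n T z = (\<lambda>t. restrict (\<lambda>i. t i \<oplus>\<^bsub>R\<^esub> z i) {..<n}) ` T"

definition vlin :: "('a, 'b) ring_scheme \<Rightarrow> nat \<Rightarrow> 'a \<Rightarrow> (nat \<Rightarrow> 'a) \<Rightarrow> 'a \<Rightarrow> (nat \<Rightarrow> 'a) \<Rightarrow> (nat \<Rightarrow> 'a)" where
  "vlin R n \<alpha> x \<beta> y = restrict (\<lambda>i. \<alpha> \<otimes>\<^bsub>R\<^esub> x i \<oplus>\<^bsub>R\<^esub> \<beta> \<otimes>\<^bsub>R\<^esub> y i) {..<n}"

text \<open>delta-mixing: Pr over independent uniform X, X' in T (T finite, nonempty here).\<close>
definition mixing :: "('a, 'b) ring_scheme \<Rightarrow> nat \<Rightarrow> real \<Rightarrow> (nat \<Rightarrow> 'a) set \<Rightarrow> bool" where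
  "mixing R n \<delta> T \<longleftrightarrow>
     (\<forall>\<alpha> \<in> carrier R - {\<zero>\<^bsub>R\<^esub>}. \<forall>\<beta> \<in> carrier R - {\<zero>\<^bsub>R\<^esub>}. \<forall>z \<in> fvecs R n.
        real (card {(x, y) \<in> T \<times> T. vlin R n \<alpha> x \<beta> y \<in> vtrans R n T z}) / real (card T) ^ 2
          \<le> real (card (carrier R)) powr (- \<delta> * real n))"

end

theory Submission
  imports Defs
begin

text \<open>
Weight each point of \<open>F\<^sub>q\<^sup>n\<close> by the product measure that puts mass \<open>(1 - r)/\<ell>\<close> on
each element of \<open>T\<^sub>i\<close> and \<open>r/(q - \<ell>)\<close> on each other element, where \<open>r = \<lfloor>\<rho>n\<rfloor>/n\<close>.
Points of the ball have weight at least that of a point with exactly \<open>\<lfloor>\<rho>n\<rfloor>\<close> errors, and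
those points alone carry mass at least \<open>1/(n+1)\<close> (the mode of a binomial distribution), so the
collision probability of the uniform distribution on the ball is at most \<open>(n+1)\<^sup>2\<close> times
the weighted mass of the pairs \<open>(x, y)\<close> with \<open>\<alpha>x + \<beta>y - z\<close> in the ball. Such a pair has at most
\<open>\<rho>n\<close> coordinates with \<open>\<alpha>x\<^sub>i + \<beta>y\<^sub>i - z\<^sub>i \<notin> T\<^sub>i\<close>, so an exponential moment
\<open>\<lambda>\<^bsup>#misses - \<rho>n\<^esup>\<close> bounds that mass by a product of one-coordinate sums.
As \<open>u \<mapsto> \<alpha>u + \<beta>v - z\<^sub>i\<close> is a bijection, each of them is at most
\<open>1 - (1 - \<lambda>)(2r - r\<^sup>2q/(q - \<ell>))\<close>, and \<open>\<lambda> = 1 - 3g/16\<close> with \<open>g = 1 - \<ell>/q - \<rho>\<close>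
makes the total at most \<open>exp(-n\<rho>g\<^sup>2/16) \<le> q\<^bsup>-\<delta>n\<^esup>\<close> once \<open>n \<ge> (log q/(\<rho>g))\<^sup>1\<^sup>4\<close>.
\<close>

section \<open>Weighted counting\<close>

lemma binomial_term_Suc:
  fixes r :: real
  assumes "j < n"
  shows "real (n choose Suc j) * r ^ Suc j * (1 - r) ^ (n - Suc j) * (real (Suc j) * (1 - r))
       = real (n choose j) * r ^ j * (1 - r) ^ (n - j) * (real (n - j) * r)"
proof -
  have binom: "real (n choose Suc j) * real (Suc j) = real (n choose j) * real (n - j)"
    by (metis binomial_absorb_comp binomial_absorption mult.commute of_nat_mult)
  have pow: "(1 - r) ^ (n - Suc j) * (1 - r) = (1 - r) ^ (n - j)"
    using assms by (metis Suc_diff_Suc power_Suc2)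
  have "real (n choose Suc j) * r ^ Suc j * (1 - r) ^ (n - Suc j) * (real (Suc j) * (1 - r))
      = (real (n choose Suc j) * real (Suc j)) * r ^ Suc j * ((1 - r) ^ (n - Suc j) * (1 - r))"
    by (simp add: mult_ac)
  also have "\<dots> = real (n choose j) * r ^ j * (1 - r) ^ (n - j) * (real (n - j) * r)"
    unfolding binom pow by (simp add: mult_ac)
  finally show ?thesis .
qed

lemma binomial_mode_lower_bound:
  fixes n k :: nat
  assumes "0 < k" "k < n"
  defines "r \<equiv> real k / real n"
  shows "1 / (real n + 1) \<le> real (n choose k) * r ^ k * (1 - r) ^ (n - k)"
proof -
  define t where "t j = real (n choose j) * r ^ j * (1 - r) ^ (n - j)" for j
  have r: "0 < r" "r < 1" and nr: "real n * r = real k"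
    using assms by (auto simp: r_def field_simps)
  have t_nonneg: "0 \<le> t j" for j
    using r by (simp add: t_def)
  have t_Suc: "t (Suc j) * (real (Suc j) * (1 - r)) = t j * (real (n - j) * r)" if "j < n" for j
    using binomial_term_Suc[OF that] by (simp add: t_def)
  \<comment> \<open>by \<open>t_Suc\<close>, \<open>t j \<le> t (Suc j)\<close> iff this is at most 0, i.e. iff \<open>j < k\<close>: \<open>k\<close> is a mode\<close>
  have ratio: "real (Suc j) * (1 - r) - real (n - j) * r = real j + 1 - r - real k" if "j \<le> n" for j
    using that nr by (simp add: of_nat_diff algebra_simps)
  have pos: "0 < real (Suc j) * (1 - r)" for j
    using r by simp
  have up: "t j \<le> t (Suc j)" if "j < k" for j
  proof -
    have "t j * (real (Suc j) * (1 - r)) \<le> t j * (real (n - j) * r)"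
      using ratio[of j] that assms(2) t_nonneg r by (intro mult_left_mono) auto
    also have "\<dots> = t (Suc j) * (real (Suc j) * (1 - r))"
      using t_Suc[of j] that assms(2) by simp
    finally show ?thesis
      using pos by (rule mult_right_le_imp_le)
  qed
  have down: "t (Suc j) \<le> t j" if "k \<le> j" "j < n" for j
  proof -
    have "t j * (real (n - j) * r) \<le> t j * (real (Suc j) * (1 - r))"
      using ratio[of j] that t_nonneg r by (intro mult_left_mono) auto
    then have "t (Suc j) * (real (Suc j) * (1 - r)) \<le> t j * (real (Suc j) * (1 - r))"
      using t_Suc[OF that(2)] by simp
    then show ?thesis
      using pos by (rule mult_right_le_imp_le)
  qed
  have t_le_mode: "t j \<le> t k" if "j \<le> n" for j
  proof (cases "j \<le> k")
    case True
    then show ?thesis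
      by (induction j rule: inc_induct) (use up order_trans in blast)+
  next
    case False
    then have "k \<le> j" by simp
    then show ?thesis
      using that by (induction j rule: dec_induct) (use down order_trans in fastforce)+
  qed
  have "1 = (r + (1 - r)) ^ n" by simp
  also have "\<dots> = (\<Sum>j\<le>n. t j)"
    unfolding binomial_ring t_def by (simp add: mult_ac)
  also have "\<dots> \<le> (\<Sum>j\<le>n. t k)"
    using t_le_mode by (intro sum_mono) simp
  also have "\<dots> = (real n + 1) * t k" by simp
  finally show ?thesis
    by (simp add: t_def field_simps)
qed

lemma weighted_relation_count_le:
  fixes \<mu> :: "'a \<Rightarrow> real"
  assumes "finite A"
    and rows: "\<And>u. u \<in> A \<Longrightarrow> card {v \<in> A. L u v} \<le> d"
    and cols: "\<And>v. v \<in> A \<Longrightarrow> card {u \<in> A. L u v} \<le> d"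
  shows "(\<Sum>u\<in>A. \<Sum>v\<in>A. if L u v then \<mu> u * \<mu> v else 0) \<le> real d * (\<Sum>u\<in>A. \<mu> u ^ 2)"
proof -
  have count: "(\<Sum>v\<in>A. if P v then c else 0) = c * real (card {v \<in> A. P v})" for P and c :: real
    using sum.inter_filter[OF assms(1), of "\<lambda>_. c" P] by (simp add: mult.commute)
  have "(\<Sum>u\<in>A. \<Sum>v\<in>A. if L u v then \<mu> u * \<mu> v else 0)
      \<le> (\<Sum>u\<in>A. \<Sum>v\<in>A. (if L u v then \<mu> u ^ 2 / 2 else 0) + (if L u v then \<mu> v ^ 2 / 2 else 0))"
    using sum_squares_bound[of "\<mu> u" "\<mu> v" for u v] by (intro sum_mono) (simp add: field_simps)
  also have "\<dots> = (\<Sum>u\<in>A. \<mu> u ^ 2 / 2 * real (card {v \<in> A. L u v}))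
                  + (\<Sum>v\<in>A. \<mu> v ^ 2 / 2 * real (card {u \<in> A. L u v}))"
    by (simp add: sum.distrib count sum.swap[of _ A A])
  also have "\<dots> \<le> (\<Sum>u\<in>A. \<mu> u ^ 2 / 2 * real d) + (\<Sum>v\<in>A. \<mu> v ^ 2 / 2 * real d)"
    using rows cols by (intro add_mono sum_mono mult_left_mono) auto
  also have "\<dots> = real d * (\<Sum>u\<in>A. \<mu> u ^ 2)"
    by (simp add: sum_distrib_left sum_distrib_right field_simps flip: sum_divide_distrib)
  finally show ?thesis .
qed

lemma two_level_weight_sums:
  fixes r :: real
  assumes fin: "finite F" and S: "S \<subseteq> F" "card S = l" and l: "0 < l" "l < card F"
  defines "q \<equiv> real (card F)"
  defines "\<mu> \<equiv> \<lambda>u. if u \<in> S then (1 - r) / real l else r / (q - real l)"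
  shows "(\<Sum>u\<in>F. \<mu> u) = 1"
    and "real l * (\<Sum>u\<in>F. \<mu> u ^ 2) = 1 - (2 * r - r ^ 2 * q / (q - real l))"
proof -
  have ql: "0 < q - real l" and lpos: "0 < real l"
    using l by (auto simp: q_def)
  have sum_split: "(\<Sum>u\<in>F. f (u \<in> S)) = real l * f True + (q - real l) * f False" for f :: "bool \<Rightarrow> real"
  proof -
    have "(\<Sum>u\<in>F. f (u \<in> S)) = (\<Sum>u\<in>F. if u \<in> S then f True else f False)"
      by (intro sum.cong) auto
    also have "\<dots> = real l * f True + real (card (F - S)) * f False"
      using fin S by (simp add: sum.If_cases Int_absorb1 Diff_eq[symmetric])
    finally show ?thesis
      using S fin l by (simp add: q_def card_Diff_subset finite_subset of_nat_diff)
  qed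
  show "(\<Sum>u\<in>F. \<mu> u) = 1"
    using sum_split[of "\<lambda>b. if b then (1 - r) / real l else r / (q - real l)"] lpos ql
    by (simp add: \<mu>_def)
  have "(\<Sum>u\<in>F. \<mu> u ^ 2) = real l * ((1 - r) / real l) ^ 2 + (q - real l) * (r / (q - real l)) ^ 2"
    unfolding \<mu>_def
    using sum_split[of "\<lambda>b. (if b then (1 - r) / real l else r / (q - real l)) ^ 2"]
    by (simp only: if_True if_False)
  also have "\<dots> = (1 - r) ^ 2 / real l + r ^ 2 / (q - real l)"
    using lpos ql by (simp add: power2_eq_square)
  finally have "real l * (\<Sum>u\<in>F. \<mu> u ^ 2) = (1 - r) ^ 2 + real l * (r ^ 2 / (q - real l))"
    using lpos by (simp add: distrib_left)
  also have "\<dots> = 1 - (2 * r - r ^ 2 * q / (q - real l))"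
    using ql by (simp add: power2_eq_square field_simps)
  finally show "real l * (\<Sum>u\<in>F. \<mu> u ^ 2) = 1 - (2 * r - r ^ 2 * q / (q - real l))" .
qed

lemma sum_sum_PiE_prod:
  fixes G :: "'i \<Rightarrow> 'a \<Rightarrow> 'a \<Rightarrow> real"
  assumes "finite I" "\<And>i. i \<in> I \<Longrightarrow> finite (A i)"
  shows "(\<Sum>x\<in>PiE I A. \<Sum>y\<in>PiE I A. \<Prod>i\<in>I. G i (x i) (y i)) = (\<Prod>i\<in>I. \<Sum>u\<in>A i. \<Sum>v\<in>A i. G i u v)"
proof -
  have "(\<Prod>i\<in>I. \<Sum>u\<in>A i. \<Sum>v\<in>A i. G i u v) = (\<Sum>x\<in>PiE I A. \<Prod>i\<in>I. \<Sum>v\<in>A i. G i (x i) v)"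
    using assms by (rule prod_sum_PiE)
  also have "\<dots> = (\<Sum>x\<in>PiE I A. \<Sum>y\<in>PiE I A. \<Prod>i\<in>I. G i (x i) (y i))"
    using assms by (intro sum.cong refl prod_sum_PiE)
  finally show ?thesis ..
qed

lemma card_pairs_le_weighted_sum:
  fixes w :: "'a \<Rightarrow> real" and f :: "'a \<Rightarrow> 'a \<Rightarrow> real"
  assumes "finite V" "B \<subseteq> V" "E \<subseteq> B \<times> B"
    and W: "0 < W" "\<And>x. x \<in> B \<Longrightarrow> W \<le> w x"
    and w_nonneg: "\<And>x. x \<in> V \<Longrightarrow> 0 \<le> w x"
    and f_nonneg: "\<And>x y. x \<in> V \<Longrightarrow> y \<in> V \<Longrightarrow> 0 \<le> f x y"
    and f_ge: "\<And>x y. (x, y) \<in> E \<Longrightarrow> 1 \<le> f x y"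
    and mass: "0 < m" "1 / m \<le> real (card B) * W"
  shows "real (card E) / real (card B) ^ 2 \<le> m ^ 2 * (\<Sum>x\<in>V. \<Sum>y\<in>V. w x * w y * f x y)"
proof -
  define \<Sigma> where "\<Sigma> = (\<Sum>x\<in>V. \<Sum>y\<in>V. w x * w y * f x y)"
  have "real (card E) = (\<Sum>(x, y)\<in>E. 1)" by simp
  also have "\<dots> \<le> (\<Sum>(x, y)\<in>E. w x * w y * f x y / W ^ 2)"
  proof (intro sum_mono, clarify)
    fix x y assume xy: "(x, y) \<in> E"
    then have "W * W \<le> w x * w y"
      using assms(3) W by (intro mult_mono) (auto intro: order_trans[OF less_imp_le])
    then have "1 \<le> w x * w y / W ^ 2"
      using W(1) by (simp add: power2_eq_square)
    then have "1 * 1 \<le> (w x * w y / W ^ 2) * f x y"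
      using f_ge[OF xy] by (intro mult_mono) linarith+
    then show "1 \<le> w x * w y * f x y / W ^ 2" by simp
  qed
  also have "\<dots> \<le> (\<Sum>(x, y)\<in>V \<times> V. w x * w y * f x y / W ^ 2)"
    using assms(1-3) w_nonneg f_nonneg
    by (intro sum_mono2) (auto intro!: finite_cartesian_product)
  also have "\<dots> = \<Sigma> / W ^ 2"
    by (simp add: \<Sigma>_def sum.cartesian_product sum_divide_distrib split_beta)
  finally have E_le: "real (card E) \<le> \<Sigma> / W ^ 2" .
  have B_pos: "0 < real (card B) * W"
    using mass by (meson less_le_trans zero_less_divide_1_iff)
  have "\<Sigma> \<ge> 0"
    unfolding \<Sigma>_def using w_nonneg f_nonneg by (intro sum_nonneg mult_nonneg_nonneg) auto
  have "real (card E) / real (card B) ^ 2 \<le> (\<Sigma> / W ^ 2) / real (card B) ^ 2"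
    using E_le by (rule divide_right_mono) simp
  also have "\<dots> = \<Sigma> / (real (card B) * W) ^ 2"
    by (simp add: power_mult_distrib mult.commute)
  also have "\<dots> \<le> m ^ 2 * \<Sigma>"
  proof -
    have "1 / (real (card B) * W) \<le> m"
      using mass B_pos by (simp add: field_simps)
    then have "(1 / (real (card B) * W)) ^ 2 \<le> m ^ 2"
      using B_pos by (intro power_mono) auto
    then have "\<Sigma> * (1 / (real (card B) * W)) ^ 2 \<le> \<Sigma> * m ^ 2"
      using \<open>\<Sigma> \<ge> 0\<close> by (rule mult_left_mono)
    then show ?thesis
      by (simp add: power_one_over mult.commute)
  qed
  finally show ?thesis
    unfolding \<Sigma>_def .
qed

lemma (in field) card_affine_preimage:
  assumes "finite (carrier R)" "S \<subseteq> carrier R" "\<gamma> \<in> carrier R" "\<gamma> \<noteq> \<zero>" "c \<in> carrier R"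
  shows "card {v \<in> carrier R. \<gamma> \<otimes> v \<oplus> c \<in> S} = card S"
proof -
  define f where "f v = \<gamma> \<otimes> v \<oplus> c" for v
  have "inj_on f (carrier R)"
  proof (rule inj_onI)
    fix x y assume "x \<in> carrier R" "y \<in> carrier R" "f x = f y"
    then show "x = y"
      using assms m_lcancel by (simp add: f_def add.right_cancel)
  qed
  moreover have "f ` carrier R \<subseteq> carrier R"
    using assms by (auto simp: f_def)
  ultimately have "bij_betw f (carrier R) (carrier R)"
    using assms(1) by (simp add: bij_betw_def endo_inj_surj)
  then have "bij_betw f {v \<in> carrier R. f v \<in> S} S"
    by (rule bij_betw_subset) (use assms(2) \<open>bij_betw f _ _\<close> in \<open>auto simp: bij_betw_def\<close>)
  then show ?thesis
    unfolding f_def by (rule bij_betw_same_card)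
qed

lemma (in field) coordinate_moment_le:
  fixes r lam :: real
  assumes fin: "finite (carrier R)" and S: "S \<subseteq> carrier R" "card S = l"
    and l: "1 \<le> l" "l < card (carrier R)"
    and \<alpha>: "\<alpha> \<in> carrier R" "\<alpha> \<noteq> \<zero>" and \<beta>: "\<beta> \<in> carrier R" "\<beta> \<noteq> \<zero>" and z: "z \<in> carrier R"
    and lam: "lam \<le> 1"
  defines "q \<equiv> real (card (carrier R))"
  defines "\<mu> \<equiv> \<lambda>u. if u \<in> S then (1 - r) / real l else r / (q - real l)"
  shows "(\<Sum>u\<in>carrier R. \<Sum>v\<in>carrier R. \<mu> u * \<mu> v * (if \<alpha> \<otimes> u \<oplus> \<beta> \<otimes> v \<ominus> z \<notin> S then lam else 1))
         \<le> 1 - (1 - lam) * (2 * r - r ^ 2 * q / (q - real l))"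
proof -
  let ?F = "carrier R"
  define L where "L u v \<longleftrightarrow> \<alpha> \<otimes> u \<oplus> \<beta> \<otimes> v \<ominus> z \<in> S" for u v
  have "0 < l"
    using l by simp
  from two_level_weight_sums[OF fin S this l(2), of r]
  have mass: "(\<Sum>u\<in>?F. \<mu> u) = 1"
    and square_mass: "real l * (\<Sum>u\<in>?F. \<mu> u ^ 2) = 1 - (2 * r - r ^ 2 * q / (q - real l))"
    unfolding \<mu>_def q_def by simp_all
  have rows: "card {v \<in> ?F. L u v} = l" if "u \<in> ?F" for u
  proof -
    have "{v \<in> ?F. L u v} = {v \<in> ?F. \<beta> \<otimes> v \<oplus> (\<alpha> \<otimes> u \<ominus> z) \<in> S}"
      using that \<alpha> \<beta> z by (auto simp: L_def a_minus_def a_ac)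
    then show ?thesis
      using card_affine_preimage[OF fin S(1) \<beta>] that \<alpha> z S(2) by simp
  qed
  have cols: "card {u \<in> ?F. L u v} = l" if "v \<in> ?F" for v
  proof -
    have "{u \<in> ?F. L u v} = {u \<in> ?F. \<alpha> \<otimes> u \<oplus> (\<beta> \<otimes> v \<ominus> z) \<in> S}"
      using that \<alpha> \<beta> z by (auto simp: L_def a_minus_def a_ac)
    then show ?thesis
      using card_affine_preimage[OF fin S(1) \<alpha>] that \<beta> z S(2) by simp
  qed
  have "\<mu> u * \<mu> v * (if \<not> L u v then lam else 1)
      = lam * (\<mu> u * \<mu> v) + (1 - lam) * (if L u v then \<mu> u * \<mu> v else 0)" for u v
    by (simp add: algebra_simps)
  then have "(\<Sum>u\<in>?F. \<Sum>v\<in>?F. \<mu> u * \<mu> v * (if \<not> L u v then lam else 1))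
      = lam * ((\<Sum>u\<in>?F. \<mu> u) * (\<Sum>v\<in>?F. \<mu> v))
        + (1 - lam) * (\<Sum>u\<in>?F. \<Sum>v\<in>?F. if L u v then \<mu> u * \<mu> v else 0)"
    by (simp add: sum.distrib sum_product sum_distrib_left sum_distrib_right mult_ac)
  also have "\<dots> \<le> lam + (1 - lam) * (1 - (2 * r - r ^ 2 * q / (q - real l)))"
    using weighted_relation_count_le[OF fin, of L l \<mu>] rows cols mass square_mass lam
    by (intro add_mono mult_left_mono) auto
  finally show ?thesis
    by (simp add: L_def algebra_simps)
qed

section \<open>Errors and weights on the list-recovery ball\<close>

definition errors :: "nat \<Rightarrow> (nat \<Rightarrow> 'a set) \<Rightarrow> (nat \<Rightarrow> 'a) \<Rightarrow> nat set" where
  "errors n T x = {i \<in> {..<n}. x i \<notin> T i}"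

lemma mem_lr_ball_iff:
  "x \<in> lr_ball R n \<rho> T \<longleftrightarrow> x \<in> fvecs R n \<and> real (card (errors n T x)) \<le> \<rho> * real n"
  by (simp add: lr_ball_def errors_def)

lemma finite_fvecs: "finite (carrier R) \<Longrightarrow> finite (fvecs R n)"
  by (simp add: fvecs_def finite_PiE)

lemma lr_ball_subset_fvecs: "lr_ball R n \<rho> T \<subseteq> fvecs R n"
  by (auto simp: lr_ball_def)

lemma finite_lr_ball: "finite (carrier R) \<Longrightarrow> finite (lr_ball R n \<rho> T)"
  using finite_subset[OF lr_ball_subset_fvecs finite_fvecs] .

definition error_box :: "('a, 'b) ring_scheme \<Rightarrow> nat \<Rightarrow> (nat \<Rightarrow> 'a set) \<Rightarrow> nat set \<Rightarrow> (nat \<Rightarrow> 'a) set" where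
  "error_box R n T S = PiE {..<n} (\<lambda>i. if i \<in> S then carrier R - T i else T i)"

lemma errors_of_mem_error_box:
  assumes "x \<in> error_box R n T S" "S \<subseteq> {..<n}"
  shows "errors n T x = S"
proof (rule Set.set_eqI)
  fix i
  have "x i \<in> (if i \<in> S then carrier R - T i else T i)" if "i < n"
    using PiE_mem[OF assms(1)[unfolded error_box_def], of i] that by simp
  then show "i \<in> errors n T x \<longleftrightarrow> i \<in> S"
    using assms(2) by (cases "i < n"; cases "i \<in> S") (auto simp: errors_def)
qed

lemma error_box_subset_fvecs:
  "\<forall>i<n. T i \<subseteq> carrier R \<Longrightarrow> error_box R n T S \<subseteq> fvecs R n"
  unfolding error_box_def fvecs_def by (intro PiE_mono) auto

lemma card_error_box:
  assumes fin: "finite (carrier R)" and T: "\<forall>i<n. T i \<subseteq> carrier R \<and> card (T i) = l"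
    and S: "S \<subseteq> {..<n}"
  shows "card (error_box R n T S) = (card (carrier R) - l) ^ card S * l ^ (n - card S)"
proof -
  have "card (error_box R n T S) = (\<Prod>i<n. if i \<in> S then card (carrier R) - l else l)"
    unfolding error_box_def card_PiE[OF finite_lessThan]
    using T fin by (intro prod.cong refl) (auto simp: card_Diff_subset finite_subset)
  also have "\<dots> = (card (carrier R) - l) ^ card S * l ^ card ({..<n} - S)"
    using S by (simp add: prod.If_cases Int_absorb1 Diff_eq)
  finally show ?thesis
    using S by (simp add: card_Diff_subset finite_subset)
qed

lemma card_lr_ball_ge:
  assumes fin: "finite (carrier R)" and T: "\<forall>i<n. T i \<subseteq> carrier R \<and> card (T i) = l"
    and k: "k \<le> n" "real k \<le> \<rho> * real n"
  shows "(n choose k) * (card (carrier R) - l) ^ k * l ^ (n - k) \<le> card (lr_ball R n \<rho> T)"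
proof -
  define Ss where "Ss = {S. S \<subseteq> {..<n} \<and> card S = k}"
  have "(n choose k) * ((card (carrier R) - l) ^ k * l ^ (n - k)) = (\<Sum>S\<in>Ss. card (error_box R n T S))"
    using card_error_box[OF fin T] n_subsets[of "{..<n}" k] by (simp add: Ss_def)
  also have "\<dots> = card (\<Union>S\<in>Ss. error_box R n T S)"
  proof (rule card_UN_disjoint[symmetric])
    show "finite Ss"
      unfolding Ss_def by (rule finite_subset[of _ "Pow {..<n}"]) auto
    show "\<forall>S\<in>Ss. finite (error_box R n T S)"
      using finite_subset[OF error_box_subset_fvecs finite_fvecs[OF fin]] T by blast
    show "\<forall>S\<in>Ss. \<forall>S'\<in>Ss. S \<noteq> S' \<longrightarrow> error_box R n T S \<inter> error_box R n T S' = {}"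
      using errors_of_mem_error_box unfolding Ss_def by blast
  qed
  also have "\<dots> \<le> card (lr_ball R n \<rho> T)"
  proof (rule card_mono[OF finite_lr_ball[OF fin]], clarify)
    fix S x assume S: "S \<in> Ss" and x: "x \<in> error_box R n T S"
    then have "errors n T x = S"
      by (intro errors_of_mem_error_box) (auto simp: Ss_def)
    moreover have "x \<in> fvecs R n"
      using x error_box_subset_fvecs[of n T R S] T by auto
    ultimately show "x \<in> lr_ball R n \<rho> T"
      using S k by (simp add: Ss_def mem_lr_ball_iff)
  qed
  finally show ?thesis
    by (simp add: mult.assoc)
qed

definition agreement_weight :: "nat \<Rightarrow> (nat \<Rightarrow> 'a set) \<Rightarrow> real \<Rightarrow> real \<Rightarrow> (nat \<Rightarrow> 'a) \<Rightarrow> real" where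
  "agreement_weight n T a b x = (\<Prod>i<n. if x i \<in> T i then a else b)"

lemma agreement_weight_eq:
  "agreement_weight n T a b x = a ^ (n - card (errors n T x)) * b ^ card (errors n T x)"
proof -
  have errs: "{..<n} \<inter> - {i. x i \<in> T i} = errors n T x"
    by (auto simp: errors_def)
  have agrees: "{..<n} \<inter> {i. x i \<in> T i} = {..<n} - errors n T x"
    by (auto simp: errors_def)
  have "card ({..<n} - errors n T x) = n - card (errors n T x)"
    by (subst card_Diff_subset) (auto simp: errors_def intro: finite_subset)
  then show ?thesis
    unfolding agreement_weight_def prod.If_cases[OF finite_lessThan] errs agrees by simp
qed

lemma power_shift_to_smaller_base_le:
  fixes a b :: real
  assumes "0 \<le> b" "b \<le> a" "e \<le> k" "k \<le> n"
  shows "a ^ (n - k) * b ^ k \<le> a ^ (n - e) * b ^ e"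
proof -
  have "a ^ (n - k) * b ^ k = (a ^ (n - k) * b ^ e) * b ^ (k - e)"
    using assms by (simp flip: power_add)
  also have "\<dots> \<le> (a ^ (n - k) * b ^ e) * a ^ (k - e)"
    using assms by (intro mult_left_mono power_mono) auto
  also have "\<dots> = a ^ (n - e) * b ^ e"
    using assms by (simp add: mult_ac flip: power_add)
  finally show ?thesis .
qed

lemma lr_ball_weight_mass_ge:
  assumes fin: "finite (carrier R)" and T: "\<forall>i<n. T i \<subseteq> carrier R \<and> card (T i) = l"
    and l: "1 \<le> l" "l < card (carrier R)" and k: "0 < k" "k < n" "real k \<le> \<rho> * real n"
  defines "r \<equiv> real k / real n" and "q \<equiv> real (card (carrier R))"
  shows "1 / (real n + 1)
         \<le> real (card (lr_ball R n \<rho> T)) * (((1 - r) / real l) ^ (n - k) * (r / (q - real l)) ^ k)"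
proof -
  have ql: "0 < q - real l" and lpos: "0 < real l"
    using l by (auto simp: q_def)
  have e1: "(q - real l) ^ k * (r / (q - real l)) ^ k = r ^ k"
    using ql by (simp flip: power_mult_distrib)
  have e2: "real l ^ (n - k) * ((1 - r) / real l) ^ (n - k) = (1 - r) ^ (n - k)"
    using lpos by (simp flip: power_mult_distrib)
  have "1 / (real n + 1) \<le> real (n choose k) * r ^ k * (1 - r) ^ (n - k)"
    unfolding r_def by (rule binomial_mode_lower_bound[OF k(1,2)])
  also have "\<dots> = real (n choose k) * ((q - real l) ^ k * (r / (q - real l)) ^ k)
                     * (real l ^ (n - k) * ((1 - r) / real l) ^ (n - k))"
    unfolding e1 e2 ..
  also have "\<dots> = real (n choose k) * real (card (carrier R) - l) ^ k * real l ^ (n - k)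
                     * (((1 - r) / real l) ^ (n - k) * (r / (q - real l)) ^ k)"
    using l by (simp add: q_def of_nat_diff mult_ac)
  also have "\<dots> \<le> real (card (lr_ball R n \<rho> T)) * (((1 - r) / real l) ^ (n - k) * (r / (q - real l)) ^ k)"
  proof (rule mult_right_mono)
    show "real (n choose k) * real (card (carrier R) - l) ^ k * real l ^ (n - k) \<le> real (card (lr_ball R n \<rho> T))"
      using card_lr_ball_ge[OF fin T _ k(3)] k(2) by (metis less_imp_le of_nat_le_iff of_nat_mult of_nat_power)
    show "0 \<le> ((1 - r) / real l) ^ (n - k) * (r / (q - real l)) ^ k"
      using ql k by (simp add: r_def)
  qed
  finally show ?thesis .
qed

lemma agreement_weight_moment_eq_prod:
  assumes "finite (carrier R)"
  shows "(\<Sum>x\<in>fvecs R n. \<Sum>y\<in>fvecs R n.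
            agreement_weight n T a b x * agreement_weight n T a b y * lam ^ card {i \<in> {..<n}. P i (x i) (y i)})
       = (\<Prod>i<n. \<Sum>u\<in>carrier R. \<Sum>v\<in>carrier R.
            (if u \<in> T i then a else b) * (if v \<in> T i then a else b) * (if P i u v then lam else 1))"
proof -
  have "agreement_weight n T a b x * agreement_weight n T a b y * lam ^ card {i \<in> {..<n}. P i (x i) (y i)}
      = (\<Prod>i<n. (if x i \<in> T i then a else b) * (if y i \<in> T i then a else b) * (if P i (x i) (y i) then lam else 1))"
    for x y
    by (simp add: agreement_weight_def prod.distrib prod.If_cases Int_def)
  then show ?thesis
    unfolding fvecs_def using assms
      sum_sum_PiE_prod[of "{..<n}" "\<lambda>_. carrier R"
        "\<lambda>i u v. (if u \<in> T i then a else b) * (if v \<in> T i then a else b) * (if P i u v then lam else 1)"]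
    by simp
qed

lemma (in ring) vtrans_lr_ball_misses_le:
  assumes "v \<in> vtrans R n (lr_ball R n \<rho> T) z" "z \<in> fvecs R n"
  shows "real (card {i \<in> {..<n}. v i \<ominus> z i \<notin> T i}) \<le> \<rho> * real n"
proof -
  from assms(1) obtain t where t: "t \<in> lr_ball R n \<rho> T" "v = restrict (\<lambda>i. t i \<oplus> z i) {..<n}"
    unfolding vtrans_def by blast
  have "v i \<ominus> z i = t i" if "i < n" for i
  proof -
    have "t \<in> fvecs R n"
      using t(1) lr_ball_subset_fvecs by blast
    then have "t i \<in> carrier R" "z i \<in> carrier R"
      using assms(2) that by (auto simp: fvecs_def)
    then show ?thesis
      using t(2) that by (simp add: a_minus_def a_assoc r_neg)
  qed
  then have "{i \<in> {..<n}. v i \<ominus> z i \<notin> T i} = errors n T t"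
    by (auto simp: errors_def)
  then show ?thesis
    using t(1) by (simp add: mem_lr_ball_iff)
qed

lemma (in field) collision_moment_le:
  fixes r lam :: real
  assumes fin: "finite (carrier R)" and l: "1 \<le> l" "l < card (carrier R)"
    and T: "\<forall>i<n. T i \<subseteq> carrier R \<and> card (T i) = l"
    and \<alpha>: "\<alpha> \<in> carrier R" "\<alpha> \<noteq> \<zero>" and \<beta>: "\<beta> \<in> carrier R" "\<beta> \<noteq> \<zero>" and z: "z \<in> fvecs R n"
    and r: "0 \<le> r" "r \<le> 1" and lam: "0 \<le> lam" "lam \<le> 1"
  defines "q \<equiv> real (card (carrier R))"
  defines "a \<equiv> (1 - r) / real l" and "b \<equiv> r / (q - real l)"
  shows "(\<Sum>x\<in>fvecs R n. \<Sum>y\<in>fvecs R n. agreement_weight n T a b x * agreement_weight n T a b y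
            * lam ^ card {i \<in> {..<n}. \<alpha> \<otimes> x i \<oplus> \<beta> \<otimes> y i \<ominus> z i \<notin> T i})
         \<le> (1 - (1 - lam) * (2 * r - r ^ 2 * q / (q - real l))) ^ n"
proof -
  have ab: "0 \<le> a" "0 \<le> b"
    using l r by (auto simp: a_def b_def q_def)
  have "(\<Prod>i<n. \<Sum>u\<in>carrier R. \<Sum>v\<in>carrier R. (if u \<in> T i then a else b) * (if v \<in> T i then a else b)
            * (if \<alpha> \<otimes> u \<oplus> \<beta> \<otimes> v \<ominus> z i \<notin> T i then lam else 1))
      \<le> (\<Prod>i<n. 1 - (1 - lam) * (2 * r - r ^ 2 * q / (q - real l)))"
  proof (intro prod_mono conjI)
    fix i assume "i \<in> {..<n}"
    then have "z i \<in> carrier R" "T i \<subseteq> carrier R" "card (T i) = l"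
      using z T by (auto simp: fvecs_def)
    from coordinate_moment_le[OF fin this(2,3) l \<alpha> \<beta> this(1) lam(2), where r = r]
    show "(\<Sum>u\<in>carrier R. \<Sum>v\<in>carrier R. (if u \<in> T i then a else b) * (if v \<in> T i then a else b)
            * (if \<alpha> \<otimes> u \<oplus> \<beta> \<otimes> v \<ominus> z i \<notin> T i then lam else 1))
        \<le> 1 - (1 - lam) * (2 * r - r ^ 2 * q / (q - real l))"
      unfolding a_def b_def q_def .
  qed (use ab lam in \<open>auto intro!: sum_nonneg\<close>)
  then show ?thesis
    using agreement_weight_moment_eq_prod[OF fin, where P = "\<lambda>i u v. \<alpha> \<otimes> u \<oplus> \<beta> \<otimes> v \<ominus> z i \<notin> T i"]
    by simp
qed

lemma (in field) lr_ball_collision_bound: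
  fixes \<rho> lam :: real
  assumes fin: "finite (carrier R)" and l: "1 \<le> l" "l < card (carrier R)"
    and T: "\<forall>i<n. T i \<subseteq> carrier R \<and> card (T i) = l"
    and k: "0 < k" "k < n" "real k \<le> \<rho> * real n" "\<rho> * real n < real k + 1"
    and r_le: "real k / real n \<le> 1 - real l / real (card (carrier R))"
    and \<alpha>: "\<alpha> \<in> carrier R" "\<alpha> \<noteq> \<zero>" and \<beta>: "\<beta> \<in> carrier R" "\<beta> \<noteq> \<zero>" and z: "z \<in> fvecs R n"
    and lam: "0 < lam" "lam \<le> 1"
  defines "B \<equiv> lr_ball R n \<rho> T" and "r \<equiv> real k / real n" and "q \<equiv> real (card (carrier R))"
  shows "real (card {(x, y) \<in> B \<times> B. vlin R n \<alpha> x \<beta> y \<in> vtrans R n B z}) / real (card B) ^ 2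
         \<le> (real n + 1) ^ 2 * lam powr (- \<rho> * real n)
            * (1 - (1 - lam) * (2 * r - r ^ 2 * q / (q - real l))) ^ n"
proof -
  define a b where "a = (1 - r) / real l" and "b = r / (q - real l)"
  define W where "W = a ^ (n - k) * b ^ k"
  define misses where "misses x y = card {i \<in> {..<n}. \<alpha> \<otimes> x i \<oplus> \<beta> \<otimes> y i \<ominus> z i \<notin> T i}" for x y
  have r: "0 < r" "r < 1"
    using k by (auto simp: r_def)
  have b_pos: "0 < b" and b_le_a: "b \<le> a"
  proof -
    have "0 < q - real l" "0 < real l" "r * q \<le> q - real l"
      using l r_le by (auto simp: r_def q_def field_simps)
    then show "0 < b" "b \<le> a"
      using r by (simp_all add: a_def b_def field_simps)
  qed
  have "real (card {(x, y) \<in> B \<times> B. vlin R n \<alpha> x \<beta> y \<in> vtrans R n B z}) / real (card B) ^ 2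
      \<le> (real n + 1) ^ 2 * (\<Sum>x\<in>fvecs R n. \<Sum>y\<in>fvecs R n.
            agreement_weight n T a b x * agreement_weight n T a b y * (lam ^ misses x y * lam powr (- \<rho> * real n)))"
  proof (rule card_pairs_le_weighted_sum[OF finite_fvecs[OF fin]])
    show "1 / (real n + 1) \<le> real (card B) * W"
      using lr_ball_weight_mass_ge[OF fin T l k(1-3)] by (simp add: B_def W_def a_def b_def r_def q_def)
    show "W \<le> agreement_weight n T a b x" if "x \<in> B" for x
    proof -
      have "card (errors n T x) \<le> k"
        using that k(4) by (simp add: B_def mem_lr_ball_iff)
      then show ?thesis
        unfolding W_def agreement_weight_eq
        using b_pos b_le_a k(2) by (intro power_shift_to_smaller_base_le) auto
    qed
    show "1 \<le> lam ^ misses x y * lam powr (- \<rho> * real n)"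
      if "(x, y) \<in> {(x, y) \<in> B \<times> B. vlin R n \<alpha> x \<beta> y \<in> vtrans R n B z}" for x y
    proof -
      have "misses x y = card {i \<in> {..<n}. vlin R n \<alpha> x \<beta> y i \<ominus> z i \<notin> T i}"
        unfolding misses_def by (rule arg_cong[where f = card]) (auto simp: vlin_def)
      then have "real (misses x y) \<le> \<rho> * real n"
        using vtrans_lr_ball_misses_le[OF _ z] that by (simp add: B_def)
      then have "1 \<le> lam powr (real (misses x y) - \<rho> * real n)"
        using lam by (metis diff_le_0_iff_le powr_mono2' powr_one_eq_one)
      then show ?thesis
        using lam by (simp add: powr_diff powr_realpow powr_minus divide_inverse)
    qed
  qed (use b_pos b_le_a lam in \<open>auto simp: B_def W_def agreement_weight_def lr_ball_subset_fvecs intro!: prod_nonneg\<close>)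
  also have "\<dots> = (real n + 1) ^ 2 * lam powr (- \<rho> * real n) * (\<Sum>x\<in>fvecs R n. \<Sum>y\<in>fvecs R n.
            agreement_weight n T a b x * agreement_weight n T a b y * lam ^ misses x y)"
    by (simp add: sum_distrib_left mult_ac)
  also have "\<dots> \<le> (real n + 1) ^ 2 * lam powr (- \<rho> * real n)
                   * (1 - (1 - lam) * (2 * r - r ^ 2 * q / (q - real l))) ^ n"
    using collision_moment_le[OF fin l T \<alpha> \<beta> z, of r lam] r lam
    by (intro mult_left_mono) (auto simp: misses_def a_def b_def q_def)
  finally show ?thesis .
qed

section \<open>Numerical estimates\<close>

lemma coordinate_gain_ge:
  fixes q l \<rho> r :: real and n :: nat
  defines "g \<equiv> 1 - l / q - \<rho>"
  assumes l: "1 \<le> l" "l < q" and \<rho>: "0 < \<rho>" and g: "0 < g"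
    and r: "0 \<le> r" "r \<le> \<rho>" "\<rho> - 1 / real n < r"
    and n: "8 / (\<rho> * g) \<le> real n"
  shows "\<rho> + 3 / 4 * \<rho> * g \<le> 2 * r - r ^ 2 * q / (q - l)"
proof -
  define c where "c = q / (q - l)"
  have c: "1 \<le> c" "1 - \<rho> * c = g * c"
    using l by (auto simp: c_def g_def field_simps)
  have n_ge: "8 \<le> real n * (\<rho> * g)"
    using n \<rho> g by (simp add: divide_le_eq)
  then have "0 < real n"
    by (cases "n = 0") auto
  with n_ge have "2 / real n \<le> \<rho> * g / 4"
    by (simp add: field_simps)
  have "(2 * \<rho> - \<rho> ^ 2 * c) - (2 * r - r ^ 2 * c) = 2 * (\<rho> - r) - (\<rho> ^ 2 - r ^ 2) * c"
    by (simp add: algebra_simps)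
  also have "\<dots> \<le> 2 * (\<rho> - r)"
    using r c by (simp add: power_mono)
  also have "\<dots> \<le> 2 / real n"
    using r by (simp add: field_simps)
  also have "\<dots> \<le> \<rho> * g / 4" by fact
  finally have "2 * \<rho> - \<rho> ^ 2 * c - \<rho> * g / 4 \<le> 2 * r - r ^ 2 * c"
    by simp
  moreover have "2 * \<rho> - \<rho> ^ 2 * c = \<rho> + \<rho> * g * c"
  proof -
    have "2 * \<rho> - \<rho> ^ 2 * c = \<rho> + \<rho> * (1 - \<rho> * c)"
      by (simp add: algebra_simps power2_eq_square)
    then show ?thesis
      using c(2) by simp
  qed
  moreover have "\<rho> * g \<le> \<rho> * g * c"
    using c(1) \<rho> g by simp
  moreover have "r ^ 2 * q / (q - l) = r ^ 2 * c"
    by (simp add: c_def)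
  ultimately show ?thesis
    by linarith
qed

lemma chernoff_exponent_le:
  fixes \<rho> g s :: real and n :: nat
  assumes \<rho>: "0 < \<rho>" and g: "0 < g" "g < 1" and s: "\<rho> + 3 / 4 * \<rho> * g \<le> s" "s \<le> 2"
    and n: "2 * ln (real n + 1) \<le> real n * \<rho> * g ^ 2 / 128"
  defines "t \<equiv> 3 * g / 16"
  shows "(real n + 1) ^ 2 * (1 - t) powr (- \<rho> * real n) * (1 - t * s) ^ n
         \<le> exp (- (real n * \<rho> * g ^ 2 / 16))"
proof -
  have "0 < 3 / 4 * \<rho> * g"
    using \<rho> g by simp
  then have "0 < s"
    using \<rho> s by linarith
  then have "g * s \<le> 1 * s"
    using g by (intro mult_right_mono) auto
  then have t: "0 < t" "t \<le> 1 / 2" "t * s < 1"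
    using g s by (auto simp: t_def)
  have "(real n + 1) ^ 2 * (1 - t) powr (- \<rho> * real n) * (1 - t * s) ^ n
      = exp (2 * ln (real n + 1) - \<rho> * real n * ln (1 - t) + real n * ln (1 - t * s))"
  proof -
    have "exp (2 * ln (real n + 1)) = (real n + 1) ^ 2"
      by (simp add: exp_of_nat_mult[of 2, simplified])
    moreover have "exp (- (\<rho> * real n * ln (1 - t))) = (1 - t) powr (- \<rho> * real n)"
      using t by (simp add: powr_def)
    moreover have "exp (real n * ln (1 - t * s)) = (1 - t * s) ^ n"
      using t by (simp add: exp_of_nat_mult)
    ultimately show ?thesis
      by (simp add: exp_add exp_diff exp_minus divide_inverse)
  qed
  also have "\<dots> \<le> exp (2 * ln (real n + 1) + \<rho> * real n * (t + 2 * t ^ 2) - real n * (t * s))"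
  proof -
    have "- ln (1 - t) \<le> t + 2 * t ^ 2"
      using ln_one_minus_pos_lower_bound[of t] t by simp
    then have "- (\<rho> * real n * ln (1 - t)) \<le> \<rho> * real n * (t + 2 * t ^ 2)"
      using \<rho> by (metis minus_mult_right mult_left_mono mult_nonneg_nonneg of_nat_0_le_iff less_imp_le)
    moreover have "real n * ln (1 - t * s) \<le> real n * (- (t * s))"
      using ln_le_minus_one[of "1 - t * s"] t by (intro mult_left_mono) auto
    ultimately show ?thesis
      by simp
  qed
  also have "\<dots> \<le> exp (2 * ln (real n + 1) - 9 / 128 * (real n * \<rho> * g ^ 2))"
  proof -
    have "real n * (t * (\<rho> + 3 / 4 * \<rho> * g)) \<le> real n * (t * s)"
      using s t by (intro mult_left_mono) auto
    moreover have "\<rho> * real n * (t + 2 * t ^ 2) - real n * (t * (\<rho> + 3 / 4 * \<rho> * g))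
        = - 9 / 128 * (real n * \<rho> * g ^ 2)"
      by (simp add: t_def power2_eq_square algebra_simps)
    ultimately show ?thesis
      by simp
  qed
  also have "\<dots> \<le> exp (- (real n * \<rho> * g ^ 2 / 16))"
    using n by simp
  finally show ?thesis .
qed

lemma delta_times_ln_le:
  fixes q l \<rho> g :: real
  assumes q: "2 \<le> q" and l: "1 \<le> l" "l < q" and \<rho>: "0 < \<rho>" "\<rho> < 1"
  shows "log q ((q - l) * (1 - \<rho>) / (\<rho> * l)) * (\<rho> ^ 4 * g ^ 2 / (16 * log 2 q)) * ln q
         \<le> \<rho> * g ^ 2 / 16"
proof -
  define K where "K = (q - l) * (1 - \<rho>) / (\<rho> * l)"
  have K_pos: "0 < K"
    using l \<rho> by (simp add: K_def)
  have ln_q: "0 < ln q" "ln q \<le> log 2 q" and log_q: "1 \<le> log 2 q"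
    using q ln_le_minus_one[of "2::real"] by (auto simp: log_def field_simps)
  have "(q - l) * (1 - \<rho>) \<le> q * l"
    using l \<rho> by (intro mult_mono) auto
  then have "K \<le> q * l / (\<rho> * l)"
    unfolding K_def using l \<rho> by (intro divide_right_mono) auto
  then have "K \<le> q / \<rho>"
    using l by simp
  then have "ln K \<le> ln (q * (1 / \<rho>))"
    using K_pos by simp
  also have "\<dots> = ln q + ln (1 / \<rho>)"
    using q \<rho> by (simp add: ln_div)
  also have "ln (1 / \<rho>) \<le> 1 / \<rho> - 1"
    using \<rho> by (intro ln_le_minus_one) simp
  finally have "\<rho> ^ 4 * ln K \<le> \<rho> ^ 4 * (ln q + (1 / \<rho> - 1))"
    using \<rho> by (intro mult_left_mono) auto
  also have "\<dots> = \<rho> * (\<rho> ^ 3 * ln q + \<rho> ^ 2 * (1 - \<rho>))"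
    using \<rho> by (simp add: field_simps power_eq_if)
  also have "\<dots> \<le> \<rho> * (\<rho> ^ 3 * log 2 q + \<rho> ^ 2 * (1 - \<rho>) * log 2 q)"
  proof -
    have "\<rho> ^ 3 * ln q \<le> \<rho> ^ 3 * log 2 q" "\<rho> ^ 2 * (1 - \<rho>) * 1 \<le> \<rho> ^ 2 * (1 - \<rho>) * log 2 q"
      using \<rho> ln_q log_q by (intro mult_left_mono; simp)+
    from add_mono[OF this]
    show ?thesis
      using \<rho> by (intro mult_left_mono) auto
  qed
  also have "\<dots> = \<rho> * (\<rho> ^ 2 * log 2 q)"
    by (simp add: algebra_simps power_eq_if)
  also have "\<dots> \<le> \<rho> * log 2 q"
    using \<rho> log_q by (intro mult_left_mono) (auto simp: power_le_one mult_left_le_one_le)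
  finally have key: "\<rho> ^ 4 * ln K \<le> \<rho> * log 2 q" .
  have "log q K * (\<rho> ^ 4 * g ^ 2 / (16 * log 2 q)) * ln q = (\<rho> ^ 4 * ln K) * g ^ 2 / (16 * log 2 q)"
    using ln_q by (simp add: log_def field_simps)
  also have "\<dots> \<le> (\<rho> * log 2 q) * g ^ 2 / (16 * log 2 q)"
    using key log_q by (intro divide_right_mono mult_right_mono) auto
  also have "\<dots> = \<rho> * g ^ 2 / 16"
    using log_q by simp
  finally show ?thesis
    unfolding K_def .
qed

lemma ge_powr_14_bounds:
  fixes B x :: real
  assumes B: "4 \<le> B" and x: "B powr 14 \<le> x"
  shows "8 * B \<le> x" "256 * B ^ 2 * ln (x + 1) \<le> x"
proof -
  have "4 ^ 10 * B ^ 4 \<le> B ^ 10 * B ^ 4"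
    using B by (intro mult_right_mono power_mono) auto
  also have "\<dots> \<le> x"
    using B x by (simp add: powr_realpow flip: power_add)
  finally have x_ge: "1048576 * B ^ 4 \<le> x"
    by simp
  have "B \<le> B ^ 4"
    using B by (simp add: power_increasing[of 1 4 B, simplified])
  then show "8 * B \<le> x"
    using x_ge B by linarith
  define s where "s = sqrt x"
  have x_pos: "1 \<le> x" and s_pos: "0 \<le> s" and s_sq: "s * s = x"
    using x_ge \<open>B \<le> B ^ 4\<close> B by (auto simp: s_def)
  have "(1024 * B ^ 2) ^ 2 \<le> x"
    using x_ge by (simp add: power_mult_distrib flip: power_mult)
  then have s_ge: "1024 * B ^ 2 \<le> s"
    unfolding s_def by (rule real_le_rsqrt)
  have "sqrt (x + 1) \<le> sqrt ((3 / 2 * s) ^ 2)"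
    using s_sq x_pos by (intro real_sqrt_le_mono) (simp add: power2_eq_square algebra_simps)
  also have "\<dots> = 3 / 2 * s"
    using s_pos by simp
  finally have "sqrt (x + 1) \<le> 3 / 2 * s" .
  moreover have "ln (x + 1) = 2 * ln (sqrt (x + 1))"
    using x_pos by (simp add: ln_sqrt)
  moreover have "ln (sqrt (x + 1)) \<le> sqrt (x + 1) - 1"
    using x_pos by (intro ln_le_minus_one) simp
  ultimately have "ln (x + 1) \<le> 3 * s"
    by linarith
  then have "256 * B ^ 2 * ln (x + 1) \<le> 256 * B ^ 2 * (3 * s)"
    by (intro mult_left_mono) auto
  also have "\<dots> = (768 * B ^ 2) * s"
    by simp
  also have "\<dots> \<le> s * s"
    using s_ge s_pos by (intro mult_right_mono) auto
  finally show "256 * B ^ 2 * ln (x + 1) \<le> x"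
    using s_sq by simp
qed

lemma large_n_bounds:
  fixes \<rho> g L :: real and n :: nat
  assumes \<rho>: "0 < \<rho>" and g: "0 < g" "g \<le> 1 - \<rho>" and L: "1 \<le> L"
    and n: "(L / (\<rho> * g)) powr 14 \<le> real n"
  shows "8 / (\<rho> * g) \<le> real n" "2 * ln (real n + 1) \<le> real n * \<rho> * g ^ 2 / 128" "1 \<le> \<rho> * real n"
proof -
  have \<rho>g: "0 < \<rho> * g" "\<rho> * g \<le> \<rho>"
    using \<rho> g by (auto simp: mult_le_cancel_left1)
  have "\<rho> * g \<le> \<rho> * (1 - \<rho>)"
    using g \<rho> by (intro mult_left_mono) auto
  also have "\<dots> = 1 / 4 - (\<rho> - 1 / 2) ^ 2"
    by (simp add: power2_eq_square algebra_simps)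
  finally have "\<rho> * g \<le> 1 / 4"
    using zero_le_power2[of "\<rho> - 1 / 2"] by linarith
  then have "4 \<le> 1 / (\<rho> * g)"
    using \<rho>g by (simp add: field_simps)
  moreover have L_ge: "1 / (\<rho> * g) \<le> L / (\<rho> * g)"
    using L \<rho>g by (simp add: divide_right_mono)
  ultimately have L4: "4 \<le> L / (\<rho> * g)"
    by linarith
  note n_bounds = ge_powr_14_bounds[OF L4 n]
  show "8 / (\<rho> * g) \<le> real n"
    using n_bounds(1) L_ge by simp
  have inv_L: "(\<rho> * g) / L \<le> \<rho> * g"
    using \<rho>g L by (simp add: divide_le_eq mult_le_cancel_left1)
  show "2 * ln (real n + 1) \<le> real n * \<rho> * g ^ 2 / 128"
  proof -
    have "((\<rho> * g) / L) ^ 2 \<le> (\<rho> * g) ^ 2"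
      using inv_L \<rho>g L by (intro power_mono) auto
    also have "\<dots> = \<rho> * (\<rho> * g ^ 2)"
      by (simp add: power2_eq_square)
    also have "\<dots> \<le> 1 * (\<rho> * g ^ 2)"
      using \<rho> g by (intro mult_right_mono) auto
    finally have "real n * ((\<rho> * g) / L) ^ 2 \<le> real n * (\<rho> * g ^ 2)"
      by (intro mult_left_mono) auto
    moreover have "256 * ln (real n + 1) \<le> real n * ((\<rho> * g) / L) ^ 2"
      using n_bounds(2) L \<rho> g by (simp add: field_simps)
    ultimately show ?thesis
      by simp
  qed
  have "(\<rho> * g) / L * (L / (\<rho> * g)) \<le> \<rho> * real n"
    using inv_L \<rho>g n_bounds(1) L4 by (intro mult_mono) auto
  then show "1 \<le> \<rho> * real n"
    using \<rho>g L g by simp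
qed

lemma floor_mult_bounds:
  fixes \<rho> :: real and n :: nat
  assumes "1 \<le> \<rho> * real n" "\<rho> < 1"
  defines "k \<equiv> nat \<lfloor>\<rho> * real n\<rfloor>"
  shows "0 < k" "k < n" "real k \<le> \<rho> * real n" "\<rho> * real n < real k + 1"
    and "real k / real n \<le> \<rho>" "\<rho> - 1 / real n < real k / real n"
proof -
  show k: "0 < k" "real k \<le> \<rho> * real n" "\<rho> * real n < real k + 1"
    using assms(1) by (auto simp: k_def)
  have n: "0 < real n"
    using assms by (auto intro: gr0I)
  then have "\<rho> * real n < real n"
    using assms(2) by simp
  then show "k < n"
    using k(2) by linarith
  show "real k / real n \<le> \<rho>"
    using k(2) n by (simp add: divide_le_eq)
  have "\<rho> - 1 / real n = (\<rho> * real n - 1) / real n"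
    using n by (simp add: field_simps)
  also have "\<dots> < real k / real n"
    using k(3) n by (intro divide_strict_right_mono) auto
  finally show "\<rho> - 1 / real n < real k / real n" .
qed

lemma lr_ball_mixing:
  fixes R :: "('a, 'b) ring_scheme" and l n :: nat and \<rho> :: real
  defines "q \<equiv> real (card (carrier R))"
  defines "g \<equiv> 1 - real l / q - \<rho>"
  assumes R: "field R" "finite (carrier R)"
    and l: "1 \<le> l" "l < card (carrier R)" and \<rho>: "0 < \<rho>" and g: "0 < g"
    and T: "\<forall>i<n. T i \<subseteq> carrier R \<and> card (T i) = l"
    and n: "(log 2 q / (\<rho> * g)) powr 14 \<le> real n"
  shows "mixing R n (log q ((q - real l) * (1 - \<rho>) / (\<rho> * real l)) * (\<rho> ^ 4 * g ^ 2 / (16 * log 2 q)))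
           (lr_ball R n \<rho> T)"
proof -
  interpret field R by fact
  define \<delta> where "\<delta> = log q ((q - real l) * (1 - \<rho>) / (\<rho> * real l)) * (\<rho> ^ 4 * g ^ 2 / (16 * log 2 q))"
  define k where "k = nat \<lfloor>\<rho> * real n\<rfloor>"
  define r where "r = real k / real n"
  define lam where "lam = 1 - 3 * g / 16"
  define s where "s = 2 * r - r ^ 2 * q / (q - real l)"
  have q: "2 \<le> q" "real l < q" "1 \<le> log 2 q"
    using l by (auto simp: q_def)
  have g_le: "g \<le> 1 - \<rho>"
    by (simp add: g_def q_def)
  then have \<rho>1: "\<rho> < 1"
    using g by simp
  note n_bounds = large_n_bounds[OF \<rho> g g_le q(3) n]
  note k = floor_mult_bounds[OF n_bounds(3) \<rho>1, folded k_def r_def]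
  have r: "0 \<le> r" "r \<le> 1 - real l / real (card (carrier R))"
    using k g by (auto simp: r_def g_def q_def)
  have lam: "0 < lam" "lam \<le> 1"
    using g g_le \<rho> by (auto simp: lam_def)
  have s: "\<rho> + 3 / 4 * \<rho> * g \<le> s" "s \<le> 2"
  proof -
    show "\<rho> + 3 / 4 * \<rho> * g \<le> s"
      using coordinate_gain_ge[of l q \<rho> r n] l q \<rho> g r k n_bounds(1) by (simp add: s_def g_def)
    have "0 \<le> r ^ 2 * q / (q - real l)"
      using q by simp
    then show "s \<le> 2"
      using k \<rho>1 by (simp add: s_def r_def)
  qed
  have \<delta>_le: "\<delta> * ln q \<le> \<rho> * g ^ 2 / 16"
    unfolding \<delta>_def using delta_times_ln_le[OF q(1) _ q(2) \<rho> \<rho>1] l by simp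
  show ?thesis
    unfolding mixing_def \<delta>_def[symmetric]
  proof (intro ballI)
    fix \<alpha> \<beta> z assume \<alpha>: "\<alpha> \<in> carrier R - {\<zero>\<^bsub>R\<^esub>}" and \<beta>: "\<beta> \<in> carrier R - {\<zero>\<^bsub>R\<^esub>}" and z: "z \<in> fvecs R n"
    have "real (card {(x, y) \<in> lr_ball R n \<rho> T \<times> lr_ball R n \<rho> T.
            vlin R n \<alpha> x \<beta> y \<in> vtrans R n (lr_ball R n \<rho> T) z}) / real (card (lr_ball R n \<rho> T)) ^ 2
        \<le> (real n + 1) ^ 2 * lam powr (- \<rho> * real n) * (1 - (1 - lam) * s) ^ n"
      using lr_ball_collision_bound[OF R(2) l T k(1-4) r(2)[unfolded r_def] _ _ _ _ z lam] \<alpha> \<beta>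
      by (simp add: s_def r_def q_def)
    also have "\<dots> \<le> exp (- (real n * \<rho> * g ^ 2 / 16))"
      using chernoff_exponent_le[OF \<rho> g _ s n_bounds(2)] g_le \<rho> by (simp add: lam_def)
    also have "\<dots> \<le> exp (- (\<delta> * ln q * real n))"
      using mult_right_mono[OF \<delta>_le, of "real n"] by (simp add: mult_ac)
    also have "\<dots> = q powr (- \<delta> * real n)"
      using q by (simp add: powr_def mult_ac)
    finally show "real (card {(x, y) \<in> lr_ball R n \<rho> T \<times> lr_ball R n \<rho> T.
            vlin R n \<alpha> x \<beta> y \<in> vtrans R n (lr_ball R n \<rho> T) z}) / real (card (lr_ball R n \<rho> T)) ^ 2
        \<le> real (card (carrier R)) powr (- \<delta> * real n)"
      by (simp add: q_def)
  qed
qed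

theorem corollary4p6:
  shows "\<exists>c::real. c > 0 \<and>
    (\<forall>(R :: nat ring) (n::nat) (l::nat) (\<rho>::real) (T :: nat \<Rightarrow> nat set).
      field R \<longrightarrow> finite (carrier R) \<longrightarrow>
      (let q = card (carrier R) in
        1 \<le> l \<longrightarrow> l < q \<longrightarrow> 0 < \<rho> \<longrightarrow> \<rho> < 1 - real l / real q \<longrightarrow>
        (\<forall>i<n. T i \<subseteq> carrier R \<and> card (T i) = l) \<longrightarrow>
        real n \<ge> (log 2 (real q) / (\<rho> * (1 - real l / real q - \<rho>))) powr c \<longrightarrow>
        mixing R n
          (log (real q) ((real q - real l) * (1 - \<rho>) / (\<rho> * real l))
             * (\<rho> ^ 4 * (1 - real l / real q - \<rho>) ^ 2 / (16 * log 2 (real q))))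
          (lr_ball R n \<rho> T)))"
  unfolding Let_def by (intro exI[of _ 14] conjI allI impI lr_ball_mixing) auto

end
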